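(* Let $M,N\ge 1$ be integers and let $\mathcal{X}=\{\mathrm{x}_1,\dots,\mathrm{x}_M\}$ and $\mathcal{Y}=\{\mathrm{y}_1,\dots,\mathrm{y}_N\}$ be two disjoint finite sets of points. Let $d_{\mathcal{X}}:\mathcal{X}\times\mathcal{X}\to\mathbb{R}^+$ and $d_{\mathcal{Y}}:\mathcal{Y}\times\mathcal{Y}\to\mathbb{R}^+$ be symmetric non-negative distance functions. Let $\mathrm{o}_{\mathcal{X}},\mathrm{o}_{\mathcal{Y}}$ be points (origins) and let $u_{\mathcal{X}}:\mathcal{X}\times\{\mathrm{o}_{\mathcal{X}}\}\to\mathbb{R}^+$ and $u_{\mathcal{Y}}:\mathcal{Y}\times\{\mathrm{o}_{\mathcal{Y}}\}\to\mathbb{R}^+$ be non-negative functions (distances to origin). Assume that each of the sets of values of $d_{\mathcal{X}}$, $d_{\mathcal{Y}}$, $u_{\mathcal{X}}$, $u_{\mathcal{Y}}$ contains at least one non-zero value. Let $f:\mathcal{X}\times\mathcal{Y}\to\mathbb{R}^+$ be a non-negative function which is not identically $0$, and write $p(\mathrm{x},\mathrm{y})=p(\mathrm{y},\mathrm{x})=f(\mathrm{x},\mathrm{y})$ for $\mathrm{x}\in\mathcal{X},\mathrm{y}\in\mathcal{Y}$. Let $\mathrm{o}\notin\mathcal{X}\cup\mathcal{Y}$ be a further (theoretical origin) point and $\mathcal{W}=\mathcal{X}\cup\mathcal{Y}\cup\{\mathrm{o}\}$, which has $S=M+N+1$ elements. Then there exists $\varepsilon>0$ such that the symmetric function $f^{\varepsilon}:\mathcal{W}\times\mathcal{W}\to\mathbb{R}^+$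 defined by $$f^{\varepsilon}(\mathrm{w},\mathrm{w}')=\begin{cases}0 & \text{if } \mathrm{w}=\mathrm{w}',\\ \big(u_{\mathcal{A}}(\mathrm{w},\mathrm{o}_{\mathcal{A}})^2+\varepsilon\big)^{1/2} & \text{if } \mathrm{w}\in\mathcal{A},\ \mathrm{w}'=\mathrm{o}\ \text{(or vice versa)},\ \mathcal{A}\in\{\mathcal{X},\mathcal{Y}\},\\ \big(d_{\mathcal{A}}(\mathrm{w},\mathrm{w}')^2+\varepsilon\big)^{1/2} & \text{if } \mathrm{w}\neq\mathrm{w}',\ \mathrm{w},\mathrm{w}'\in\mathcal{A},\ \mathcal{A}\in\{\mathcal{X},\mathcal{Y}\},\\ \big(p(\mathrm{w},\mathrm{w}')^2+\varepsilon\big)^{1/2} & \text{if } \mathrm{w}\in\mathcal{X},\mathrm{w}'\in\mathcal{Y} \text{ or vice versa},\end{cases}$$ has the property that $\mathcal{W}$ can be embedded into the Euclidean space $\mathbb{R}^{Q}$, $Q=M+N+2$, with respect to $f^{\varepsilon}$; that is, there is a map $\phi:\mathcal{W}\to\mathbb{R}^{Q}$ which is a bijection onto its image such that $\|\phi(\mathrm{w})-\phi(\mathrm{w}')\|_{\mathbb{R}^Q}=f^{\varepsilon}(\mathrm{w},\mathrm{w}')$ for all $\mathrm{w},\mathrm{w}'\in\mathcal{W}$.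
   Context: $\mathbb{R}^+$ denotes the non-negative reals and $\|\cdot\|_{\mathbb{R}^Q}$ the Euclidean norm. A set $\mathcal{V}$ equipped with a symmetric non-negative function $h$ on $\mathcal{V}\times\mathcal{V}$ is said to be embeddable into $\mathbb{R}^Q$ with respect to $h$ if there is a bijection $\phi$ from $\mathcal{V}$ onto a subset of $\mathbb{R}^Q$ with $\|\phi(\mathrm{v})-\phi(\mathrm{v}')\|=h(\mathrm{v},\mathrm{v}')$ for all $\mathrm{v},\mathrm{v}'\in\mathcal{V}$. *)

theory Defs
  imports "HOL-Analysis.Analysis"
begin

definition embeds_wrt :: "'a set \<Rightarrow> ('a \<Rightarrow> 'a \<Rightarrow> real) \<Rightarrow> ('a \<Rightarrow> 'b::real_normed_vector) \<Rightarrow> bool" where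
  "embeds_wrt V h phi \<longleftrightarrow> inj_on phi V \<and>
     (\<forall>v\<in>V. \<forall>v'\<in>V. norm (phi v - phi v') = h v v')"

definition f_eps ::
  "'a set \<Rightarrow> 'a set \<Rightarrow> 'a \<Rightarrow> ('a \<Rightarrow> 'a \<Rightarrow> real) \<Rightarrow> ('a \<Rightarrow> 'a \<Rightarrow> real)
   \<Rightarrow> ('a \<Rightarrow> 'b \<Rightarrow> real) \<Rightarrow> 'b \<Rightarrow> ('a \<Rightarrow> 'b \<Rightarrow> real) \<Rightarrow> 'b
   \<Rightarrow> ('a \<Rightarrow> 'a \<Rightarrow> real) \<Rightarrow> real \<Rightarrow> 'a \<Rightarrow> 'a \<Rightarrow> real" where
  "f_eps X Y oW dX dY uX oX uY oY f \<epsilon> w w' =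
     (if w = w' then 0
      else if w \<in> X \<and> w' = oW then sqrt ((uX w oX)\<^sup>2 + \<epsilon>)
      else if w = oW \<and> w' \<in> X then sqrt ((uX w' oX)\<^sup>2 + \<epsilon>)
      else if w \<in> Y \<and> w' = oW then sqrt ((uY w oY)\<^sup>2 + \<epsilon>)
      else if w = oW \<and> w' \<in> Y then sqrt ((uY w' oY)\<^sup>2 + \<epsilon>)
      else if w \<in> X \<and> w' \<in> X then sqrt ((dX w w')\<^sup>2 + \<epsilon>)
      else if w \<in> Y \<and> w' \<in> Y then sqrt ((dY w w')\<^sup>2 + \<epsilon>)
      else if w \<in> X \<and> w' \<in> Y then sqrt ((f w w')\<^sup>2 + \<epsilon>)
      else if w \<in> Y \<and> w' \<in> X then sqrt ((f w' w)\<^sup>2 + \<epsilon>)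
      else 0)"

end

theory Submission
  imports Defs
begin

text \<open>
  By Schoenberg's criterion, a symmetric function h with zero diagonal on a finite set W embeds
  isometrically into a Euclidean space of dimension at least card W - 1 as soon as its Gram kernel
  at a base point b, (h(i,b)^2 + h(j,b)^2 - h(i,j)^2) / 2, is positive semidefinite on W - {b};
  the realising vectors are built by a Cholesky-type induction spending one fresh coordinate per
  point. Adding \<epsilon> to every off-diagonal squared distance adds \<epsilon>/2 to every
  entry of the Gram kernel and another \<epsilon>/2 to its diagonal, and the result is positive
  semidefinite once \<epsilon>/2 exceeds the sum of the absolute values of the unperturbed kernel.
\<close>

definition quad_form :: "'i set \<Rightarrow> ('i \<Rightarrow> 'i \<Rightarrow> real) \<Rightarrow> ('i \<Rightarrow> real) \<Rightarrow> real" where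
  "quad_form I g c = (\<Sum>i\<in>I. \<Sum>j\<in>I. c i * c j * g i j)"

definition psd_on :: "'i set \<Rightarrow> ('i \<Rightarrow> 'i \<Rightarrow> real) \<Rightarrow> bool" where
  "psd_on I g \<longleftrightarrow> (\<forall>c. 0 \<le> quad_form I g c)"

lemma psd_on_cong:
  assumes "psd_on I g" "\<And>i j. i \<in> I \<Longrightarrow> j \<in> I \<Longrightarrow> g i j = h i j"
  shows "psd_on I h"
  using assms by (simp add: psd_on_def quad_form_def cong: sum.cong)

lemma psd_on_add:
  assumes "psd_on I g" "psd_on I h"
  shows "psd_on I (\<lambda>i j. g i j + h i j)"
  using assms by (simp add: psd_on_def quad_form_def distrib_left sum.distrib add_nonneg_nonneg)

lemma psd_on_const:
  assumes "0 \<le> t"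
  shows "psd_on I (\<lambda>_ _. t)"
proof -
  have "quad_form I (\<lambda>_ _. t) c = t * (\<Sum>i\<in>I. c i)\<^sup>2" for c
    by (simp add: quad_form_def power2_eq_square sum_product sum_distrib_left mult_ac)
  then show ?thesis using assms by (simp add: psd_on_def)
qed

lemma psd_on_diagonally_dominant:
  fixes a :: "'i \<Rightarrow> 'i \<Rightarrow> real"
  assumes "finite I" "(\<Sum>i\<in>I. \<Sum>j\<in>I. \<bar>a i j\<bar>) \<le> t"
  shows "psd_on I (\<lambda>i j. a i j + (if i = j then t else 0))"
  unfolding psd_on_def
proof
  fix c :: "'i \<Rightarrow> real"
  define S where "S = (\<Sum>i\<in>I. (c i)\<^sup>2)"
  have S_nonneg: "0 \<le> S" unfolding S_def by (rule sum_nonneg) simp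
  have sq_le: "(c i)\<^sup>2 \<le> S" if "i \<in> I" for i
    unfolding S_def using that assms(1) by (intro member_le_sum) auto
  have "\<bar>c i * c j\<bar> \<le> S" if "i \<in> I" "j \<in> I" for i j
  proof -
    have "\<bar>c i * c j\<bar> \<le> ((c i)\<^sup>2 + (c j)\<^sup>2) / 2"
      using sum_squares_bound[of "\<bar>c i\<bar>" "\<bar>c j\<bar>"] by (simp add: abs_mult)
    also have "\<dots> \<le> S"
      using sq_le[of i] sq_le[of j] that by simp
    finally show ?thesis .
  qed
  then have "\<bar>c i * c j * a i j\<bar> \<le> \<bar>a i j\<bar> * S" if "i \<in> I" "j \<in> I" for i j
    unfolding abs_mult[of "c i * c j"] using that by (subst mult.commute) (intro mult_right_mono, auto)
  then have "- (\<bar>a i j\<bar> * S) \<le> c i * c j * a i j" if "i \<in> I" "j \<in> I" for i j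
    using that abs_ge_minus_self[of "c i * c j * a i j"] by fastforce
  then have "- ((\<Sum>i\<in>I. \<Sum>j\<in>I. \<bar>a i j\<bar>) * S) \<le> quad_form I a c"
    unfolding quad_form_def sum_distrib_right sum_negf[symmetric] by (intro sum_mono) auto
  moreover have "quad_form I (\<lambda>i j. if i = j then t else 0) c = t * S"
    using assms(1) by (simp add: quad_form_def S_def sum_distrib_left power2_eq_square mult_ac
        if_distrib cong: if_cong)
  moreover have "(\<Sum>i\<in>I. \<Sum>j\<in>I. \<bar>a i j\<bar>) * S \<le> t * S"
    using assms(2) S_nonneg by (rule mult_right_mono)
  ultimately show "0 \<le> quad_form I (\<lambda>i j. a i j + (if i = j then t else 0)) c"
    by (simp add: quad_form_def distrib_left sum.distrib)
qed

lemma quad_form_insert: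
  assumes "finite F" "a \<notin> F" and sym: "\<And>i. i \<in> F \<Longrightarrow> g i a = g a i"
  shows "quad_form (insert a F) g c
     = (c a)\<^sup>2 * g a a + 2 * c a * (\<Sum>j\<in>F. c j * g a j) + quad_form F g c"
proof -
  have "(\<Sum>i\<in>F. c i * c a * g i a) = c a * (\<Sum>j\<in>F. c j * g a j)"
    by (simp add: sum_distrib_left sym mult_ac cong: sum.cong)
  moreover have "(\<Sum>j\<in>F. c a * c j * g a j) = c a * (\<Sum>j\<in>F. c j * g a j)"
    by (simp add: sum_distrib_left mult_ac)
  ultimately show ?thesis
    using assms(1,2) by (simp add: quad_form_def sum.distrib power2_eq_square)
qed

lemma quad_form_subset_support:
  assumes "finite I" "J \<subseteq> I" "\<And>i. i \<in> I - J \<Longrightarrow> c i = 0"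
  shows "quad_form I g c = quad_form J g c"
proof -
  have "(\<Sum>i\<in>I. \<Sum>j\<in>I. c i * c j * g i j) = (\<Sum>i\<in>J. \<Sum>j\<in>I. c i * c j * g i j)"
    using assms by (intro sum.mono_neutral_right) auto
  also have "\<dots> = (\<Sum>i\<in>J. \<Sum>j\<in>J. c i * c j * g i j)"
    using assms by (intro sum.cong refl sum.mono_neutral_right) auto
  finally show ?thesis by (simp add: quad_form_def)
qed

lemma psd_on_diag_nonneg:
  assumes "finite I" "psd_on I g" "a \<in> I"
  shows "0 \<le> g a a"
proof -
  define c where "c k = (if k = a then 1 else 0 :: real)" for k
  have "quad_form I g c = quad_form {a} g c"
    using assms by (intro quad_form_subset_support) (auto simp: c_def)
  also have "\<dots> = g a a" by (simp add: quad_form_def c_def)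
  finally show ?thesis using assms(2) by (metis psd_on_def)
qed

lemma psd_on_diag_zero_imp_row_zero:
  assumes "finite I" "psd_on I g" "a \<in> I" "j \<in> I" "g a a = 0" "g j a = g a j"
  shows "g a j = 0"
proof (rule ccontr)
  assume nz: "g a j \<noteq> 0"
  then have "a \<noteq> j" using assms(5) by auto
  define t where "t = - (g j j + 1) / (2 * g a j)"
  define c where "c k = (if k = a then t else if k = j then 1 else 0)" for k
  have "quad_form I g c = quad_form {a, j} g c"
    using assms by (intro quad_form_subset_support) (auto simp: c_def)
  also have "\<dots> = 2 * t * g a j + g j j"
    using \<open>a \<noteq> j\<close> assms(5,6) by (simp add: quad_form_def c_def)
  also have "\<dots> = -1" using nz by (simp add: t_def field_simps)
  finally show False using assms(2) unfolding psd_on_def by (metis neg_0_le_iff_le not_one_le_zero)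
qed

lemma psd_on_schur_complement:
  assumes "finite F" "a \<notin> F" "psd_on (insert a F) g"
    and sym: "\<And>i. i \<in> F \<Longrightarrow> g i a = g a i"
  shows "psd_on F (\<lambda>i j. g i j - g i a * g a j / g a a)"
  unfolding psd_on_def
proof
  fix c :: "'a \<Rightarrow> real"
  define B where "B = (\<Sum>j\<in>F. c j * g a j)"
  \<comment> \<open>the coefficient of a that completes the square\<close>
  define c' where "c' = c(a := - B / g a a)"
  have "quad_form F (\<lambda>i j. g i j - g i a * g a j / g a a) c = quad_form F g c - B\<^sup>2 / g a a"
    by (simp add: quad_form_def B_def sym algebra_simps sum_subtractf sum_distrib_left
        sum_divide_distrib power2_eq_square cong: sum.cong)
  also have "\<dots> = quad_form (insert a F) g c'"
  proof -
    have "quad_form F g c' = quad_form F g c" "(\<Sum>j\<in>F. c' j * g a j) = B"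
      using assms(2) by (auto simp: quad_form_def c'_def B_def intro!: sum.cong)
    then show ?thesis
      using quad_form_insert[OF assms(1,2), of g c'] sym
      by (cases "g a a = 0") (simp_all add: c'_def power2_eq_square field_simps)
  qed
  also have "\<dots> \<ge> 0" using assms(3) by (simp add: psd_on_def)
  finally show "0 \<le> quad_form F (\<lambda>i j. g i j - g i a * g a j / g a a) c" .
qed

lemma gram_extend_by_fresh_axis:
  fixes w :: "'i \<Rightarrow> real^'n::finite"
  assumes "finite F" "a \<notin> F" "psd_on (insert a F) g"
    and sym: "\<And>i j. i \<in> insert a F \<Longrightarrow> j \<in> insert a F \<Longrightarrow> g i j = g j i"
    and w: "\<And>i j. i \<in> F \<Longrightarrow> j \<in> F \<Longrightarrow> w i \<bullet> w j = g i j - g i a * g a j / g a a"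
    and w_k: "\<And>i. i \<in> F \<Longrightarrow> w i $ k = 0"
  shows "\<exists>r. \<forall>i\<in>insert a F. \<forall>j\<in>insert a F.
           ((w(a := 0)) i + r i *\<^sub>R axis k 1) \<bullet> ((w(a := 0)) j + r j *\<^sub>R axis k 1) = g i j"
proof -
  define s where "s = sqrt (g a a)"
  have "0 \<le> g a a" using assms(1,3) by (intro psd_on_diag_nonneg) auto
  then have ss: "s * s = g a a" by (simp add: s_def)
  define r where "r i = (if i = a then s else g a i / s)" for i
  have r_aa: "r a * r a = g a a" using ss by (simp add: r_def)
  have r_row: "r a * r i = g a i" if "i \<in> F" for i
  proof (cases "s = 0")
    case True
    then have "g a i = 0"
      using psd_on_diag_zero_imp_row_zero[of "insert a F" g a i] ss that sym[of i a] assms(1,3)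
      by auto
    then show ?thesis using True by (simp add: r_def)
  qed (use that assms(2) in \<open>auto simp: r_def\<close>)
  have r_F: "r i * r j = g i a * g a j / g a a" if "i \<in> F" "j \<in> F" for i j
    using that assms(2) sym[of i a] by (auto simp: r_def ss[symmetric])
  have "((w(a := 0)) i + r i *\<^sub>R axis k 1) \<bullet> ((w(a := 0)) j + r j *\<^sub>R axis k 1) = g i j"
    if i: "i \<in> insert a F" and j: "j \<in> insert a F" for i j
  proof -
    have "((w(a := 0)) i + r i *\<^sub>R axis k 1) \<bullet> ((w(a := 0)) j + r j *\<^sub>R axis k 1)
        = (w(a := 0)) i \<bullet> (w(a := 0)) j + r i * r j"
      using i j w_k
      by (auto simp: inner_add_left inner_add_right inner_axis inner_axis' inner_axis_axis)
    also have "\<dots> = g i j"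
    proof -
      consider "i = a" "j = a" | "i = a" "j \<in> F" | "i \<in> F" "j = a" | "i \<in> F" "j \<in> F"
        using i j by auto
      then show ?thesis
      proof cases
        case 3
        then show ?thesis using r_row[of i] sym[of i a] assms(2) by (simp add: mult.commute)
      next
        case 4
        then show ?thesis using w r_F assms(2) by auto
      qed (use r_aa r_row assms(2) in auto)
    qed
    finally show ?thesis .
  qed
  then show ?thesis by blast
qed

lemma gram_realization:
  fixes g :: "'i \<Rightarrow> 'i \<Rightarrow> real" and e :: "'i \<Rightarrow> 'n::finite"
  assumes "finite I" "inj_on e I" "psd_on I g" "\<And>i j. i \<in> I \<Longrightarrow> j \<in> I \<Longrightarrow> g i j = g j i"
  shows "\<exists>v :: 'i \<Rightarrow> real^'n. (\<forall>i\<in>I. \<forall>j\<in>I. v i \<bullet> v j = g i j)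
           \<and> (\<forall>i\<in>I. \<forall>k. k \<notin> e ` I \<longrightarrow> v i $ k = 0)"
  using assms
proof (induction I arbitrary: g rule: finite_induct)
  case empty
  then show ?case by simp
next
  case (insert a F)
  note sym = insert.prems(3)
  text \<open>The point a receives the fresh coordinate e a; the remaining points are realised
    for the Schur complement of g a a (which is g itself when g a a = 0, as x / 0 = 0).\<close>
  define g' where "g' i j = g i j - g i a * g a j / g a a" for i j
  have "psd_on F g'"
    unfolding g'_def using insert.hyps insert.prems(2) sym
    by (intro psd_on_schur_complement) auto
  moreover have "\<And>i j. i \<in> F \<Longrightarrow> j \<in> F \<Longrightarrow> g' i j = g' j i"
    unfolding g'_def using sym by (metis insert_iff mult.commute)
  ultimately obtain w :: "'i \<Rightarrow> real^'n"
    where w: "\<forall>i\<in>F. \<forall>j\<in>F. w i \<bullet> w j = g' i j"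
      and w_supp: "\<forall>i\<in>F. \<forall>k. k \<notin> e ` F \<longrightarrow> w i $ k = 0"
    using insert.IH[of g'] insert.prems(1) by (auto simp: inj_on_insert)
  have "e a \<notin> e ` F" using insert.prems(1) insert.hyps(2) by auto
  then obtain r where r: "\<forall>i\<in>insert a F. \<forall>j\<in>insert a F.
      ((w(a := 0)) i + r i *\<^sub>R axis (e a) 1) \<bullet> ((w(a := 0)) j + r j *\<^sub>R axis (e a) 1) = g i j"
    using gram_extend_by_fresh_axis[OF insert.hyps insert.prems(2) sym, of w "e a"] w w_supp
    by (auto simp: g'_def)
  show ?case
  proof (intro exI[of _ "\<lambda>i. (w(a := 0)) i + r i *\<^sub>R axis (e a) 1"] conjI ballI allI impI)
    fix i k assume "i \<in> insert a F" "k \<notin> e ` insert a F"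
    then show "((w(a := 0)) i + r i *\<^sub>R axis (e a) 1) $ k = 0"
      using w_supp by (auto simp: axis_def)
  qed (use r in blast)
qed

text \<open>If h is realised by phi, then gram_kernel h b i j = (phi i - phi b) \<bullet> (phi j - phi b).\<close>

definition gram_kernel :: "('a \<Rightarrow> 'a \<Rightarrow> real) \<Rightarrow> 'a \<Rightarrow> 'a \<Rightarrow> 'a \<Rightarrow> real" where
  "gram_kernel h b i j = ((h i b)\<^sup>2 + (h j b)\<^sup>2 - (h i j)\<^sup>2) / 2"

lemma embeds_wrt_if_gram_kernel_psd:
  fixes h :: "'a \<Rightarrow> 'a \<Rightarrow> real"
  assumes "finite W" "b \<in> W" "card W \<le> CARD('n::finite) + 1"
    and sym: "\<And>v v'. v \<in> W \<Longrightarrow> v' \<in> W \<Longrightarrow> h v v' = h v' v"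
    and diag: "\<And>v. v \<in> W \<Longrightarrow> h v v = 0"
    and pos: "\<And>v v'. v \<in> W \<Longrightarrow> v' \<in> W \<Longrightarrow> v \<noteq> v' \<Longrightarrow> 0 < h v v'"
    and psd: "psd_on (W - {b}) (gram_kernel h b)"
  shows "\<exists>phi :: 'a \<Rightarrow> real^'n. embeds_wrt W h phi"
proof -
  have "card (W - {b}) \<le> card (UNIV :: 'n set)"
    using assms(1-3) by simp
  then obtain e :: "'a \<Rightarrow> 'n" where "inj_on e (W - {b})"
    using card_le_inj[of "W - {b}" "UNIV :: 'n set"] assms(1) by auto
  moreover have "gram_kernel h b i j = gram_kernel h b j i" if "i \<in> W" "j \<in> W" for i j
    using sym[OF that] by (simp add: gram_kernel_def)
  ultimately obtain v :: "'a \<Rightarrow> real^'n"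
    where v: "\<forall>i\<in>W - {b}. \<forall>j\<in>W - {b}. v i \<bullet> v j = gram_kernel h b i j"
    using gram_realization[of "W - {b}" e "gram_kernel h b"] psd assms(1) by auto
  define phi where "phi w = (if w = b then 0 else v w)" for w
  have inner: "phi w \<bullet> phi w' = gram_kernel h b w w'" if "w \<in> W" "w' \<in> W" for w w'
    using v that sym[of w b] sym[of w' b] sym[of b w'] diag[of b] assms(2)
    by (auto simp: phi_def gram_kernel_def)
  have dist: "norm (phi w - phi w') = h w w'" if "w \<in> W" "w' \<in> W" for w w'
  proof -
    have "(norm (phi w - phi w'))\<^sup>2 = phi w \<bullet> phi w + phi w' \<bullet> phi w' - 2 * (phi w \<bullet> phi w')"
      by (simp add: power2_norm_eq_inner inner_diff_left inner_diff_right inner_commute)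
    also have "\<dots> = (h w w')\<^sup>2"
      using inner[OF that] inner[of w w] inner[of w' w'] that diag by (simp add: gram_kernel_def)
    finally show ?thesis
      using that diag pos[of w w'] by (cases "w = w'") (auto simp: power2_eq_iff_nonneg)
  qed
  have "inj_on phi W"
    using dist pos by (intro inj_onI) (metis less_irrefl norm_zero right_minus_eq)
  then show ?thesis using dist by (auto simp: embeds_wrt_def)
qed

lemma gram_kernel_perturb:
  assumes sq: "\<And>v v'. v \<in> W \<Longrightarrow> v' \<in> W \<Longrightarrow> (h' v v')\<^sup>2 = (h v v')\<^sup>2 + (if v = v' then 0 else \<epsilon>)"
    and "b \<in> W" "i \<in> W - {b}" "j \<in> W - {b}"
  shows "gram_kernel h' b i j = gram_kernel h b i j + \<epsilon> / 2 + (if i = j then \<epsilon> / 2 else 0)"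
  using sq[of i b] sq[of j b] sq[of i j] assms(2-4) by (auto simp: gram_kernel_def field_simps)

lemma embeds_wrt_perturbed:
  fixes h h' :: "'a \<Rightarrow> 'a \<Rightarrow> real"
  assumes "finite W" "b \<in> W" "card W \<le> CARD('n::finite) + 1"
    and sym: "\<And>v v'. v \<in> W \<Longrightarrow> v' \<in> W \<Longrightarrow> h' v v' = h' v' v"
    and nonneg: "\<And>v v'. v \<in> W \<Longrightarrow> v' \<in> W \<Longrightarrow> 0 \<le> h' v v'"
    and diag: "\<And>v. v \<in> W \<Longrightarrow> h' v v = 0"
    and sq: "\<And>v v'. v \<in> W \<Longrightarrow> v' \<in> W \<Longrightarrow> (h' v v')\<^sup>2 = (h v v')\<^sup>2 + (if v = v' then 0 else \<epsilon>)"
    and large: "2 * (\<Sum>i\<in>W - {b}. \<Sum>j\<in>W - {b}. \<bar>gram_kernel h b i j\<bar>) \<le> \<epsilon>"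
    and "0 < \<epsilon>"
  shows "\<exists>phi :: 'a \<Rightarrow> real^'n. embeds_wrt W h' phi"
proof (rule embeds_wrt_if_gram_kernel_psd[OF assms(1-3) sym diag])
  show "0 < h' v v'" if "v \<in> W" "v' \<in> W" "v \<noteq> v'" for v v'
  proof -
    have "0 < (h' v v')\<^sup>2"
      using sq[of v v'] that \<open>0 < \<epsilon>\<close> by (simp add: add_nonneg_pos)
    then show ?thesis using nonneg[of v v'] that by (simp add: less_le)
  qed
  have "psd_on (W - {b}) (\<lambda>i j. (gram_kernel h b i j + (if i = j then \<epsilon> / 2 else 0)) + \<epsilon> / 2)"
    using assms(1) large \<open>0 < \<epsilon>\<close>
    by (intro psd_on_add psd_on_diagonally_dominant psd_on_const) auto
  then show "psd_on (W - {b}) (gram_kernel h' b)"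
    by (rule psd_on_cong) (simp add: gram_kernel_perturb[OF sq assms(2)])
qed

lemma f_eps_squared:
  assumes "X \<inter> Y = {}" "oW \<notin> X \<union> Y" "0 \<le> \<epsilon>" "w \<in> X \<union> Y \<union> {oW}" "w' \<in> X \<union> Y \<union> {oW}"
  shows "(f_eps X Y oW dX dY uX oX uY oY f \<epsilon> w w')\<^sup>2
       = (f_eps X Y oW dX dY uX oX uY oY f 0 w w')\<^sup>2 + (if w = w' then 0 else \<epsilon>)"
  using assms unfolding f_eps_def by auto

lemma f_eps_sym:
  assumes "X \<inter> Y = {}" "oW \<notin> X \<union> Y" "w \<in> X \<union> Y \<union> {oW}" "w' \<in> X \<union> Y \<union> {oW}"
    and "\<forall>x\<in>X. \<forall>x'\<in>X. dX x x' = dX x' x" "\<forall>y\<in>Y. \<forall>y'\<in>Y. dY y y' = dY y' y"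
  shows "f_eps X Y oW dX dY uX oX uY oY f \<epsilon> w w' = f_eps X Y oW dX dY uX oX uY oY f \<epsilon> w' w"
proof -
  have "w = oW \<or> w \<in> X - Y - {oW} \<or> w \<in> Y - X - {oW}"
    "w' = oW \<or> w' \<in> X - Y - {oW} \<or> w' \<in> Y - X - {oW}"
    using assms(1-4) by auto
  then show ?thesis
    using assms(5,6) by (elim disjE; auto simp: f_eps_def)
qed

lemma f_eps_nonneg: "0 \<le> \<epsilon> \<Longrightarrow> 0 \<le> f_eps X Y oW dX dY uX oX uY oY f \<epsilon> w w'"
  unfolding f_eps_def by auto

theorem theorem3:
  fixes X Y :: "'a set" and oW :: 'a
    and dX dY :: "'a \<Rightarrow> 'a \<Rightarrow> real"
    and uX uY :: "'a \<Rightarrow> 'b \<Rightarrow> real" and oX oY :: 'b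
    and f :: "'a \<Rightarrow> 'a \<Rightarrow> real"
  assumes finX: "finite X" and finY: "finite Y"
    and neX: "X \<noteq> {}" and neY: "Y \<noteq> {}"
    and disj: "X \<inter> Y = {}"
    and o_notin: "oW \<notin> X \<union> Y"
    and dX_sym: "\<forall>x\<in>X. \<forall>x'\<in>X. dX x x' = dX x' x"
    and dX_nonneg: "\<forall>x\<in>X. \<forall>x'\<in>X. dX x x' \<ge> 0"
    and dY_sym: "\<forall>y\<in>Y. \<forall>y'\<in>Y. dY y y' = dY y' y"
    and dY_nonneg: "\<forall>y\<in>Y. \<forall>y'\<in>Y. dY y y' \<ge> 0"
    and uX_nonneg: "\<forall>x\<in>X. uX x oX \<ge> 0"
    and uY_nonneg: "\<forall>y\<in>Y. uY y oY \<ge> 0"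
    and dX_nz: "\<exists>x\<in>X. \<exists>x'\<in>X. dX x x' \<noteq> 0"
    and dY_nz: "\<exists>y\<in>Y. \<exists>y'\<in>Y. dY y y' \<noteq> 0"
    and uX_nz: "\<exists>x\<in>X. uX x oX \<noteq> 0"
    and uY_nz: "\<exists>y\<in>Y. uY y oY \<noteq> 0"
    and f_nonneg: "\<forall>x\<in>X. \<forall>y\<in>Y. f x y \<ge> 0"
    and f_nz: "\<exists>x\<in>X. \<exists>y\<in>Y. f x y \<noteq> 0"
    and dimQ: "CARD('n::finite) = card X + card Y + 2"
  shows "\<exists>\<epsilon>>0. \<exists>phi :: 'a \<Rightarrow> real ^ 'n.
           embeds_wrt (X \<union> Y \<union> {oW}) (f_eps X Y oW dX dY uX oX uY oY f \<epsilon>) phi"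
proof -
  let ?F = "f_eps X Y oW dX dY uX oX uY oY f"
  define W where "W = X \<union> Y \<union> {oW}"
  define \<epsilon> :: real
    where "\<epsilon> = 2 * (\<Sum>i\<in>W - {oW}. \<Sum>j\<in>W - {oW}. \<bar>gram_kernel (?F 0) oW i j\<bar>) + 1"
  have "0 < \<epsilon>" unfolding \<epsilon>_def by (simp add: add_nonneg_pos sum_nonneg)
  have "\<exists>phi :: 'a \<Rightarrow> real ^ 'n. embeds_wrt W (?F \<epsilon>) phi"
  proof (rule embeds_wrt_perturbed[where h = "?F 0" and b = oW])
    show "finite W" "oW \<in> W" using finX finY by (simp_all add: W_def)
    show "card W \<le> CARD('n) + 1"
      using finX finY disj o_notin dimQ by (simp add: W_def card_Un_disjoint)
    show "?F \<epsilon> v v' = ?F \<epsilon> v' v" if "v \<in> W" "v' \<in> W" for v v'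
      using f_eps_sym[OF disj o_notin _ _ dX_sym dY_sym] that by (simp add: W_def)
    show "0 \<le> ?F \<epsilon> v v'" for v v' using \<open>0 < \<epsilon>\<close> by (simp add: f_eps_nonneg)
    show "?F \<epsilon> v v = 0" for v by (simp add: f_eps_def)
    show "(?F \<epsilon> v v')\<^sup>2 = (?F 0 v v')\<^sup>2 + (if v = v' then 0 else \<epsilon>)" if "v \<in> W" "v' \<in> W" for v v'
      using that unfolding W_def by (rule f_eps_squared[OF disj o_notin less_imp_le[OF \<open>0 < \<epsilon>\<close>]])
    show "2 * (\<Sum>i\<in>W - {oW}. \<Sum>j\<in>W - {oW}. \<bar>gram_kernel (?F 0) oW i j\<bar>) \<le> \<epsilon>"
      by (simp add: \<epsilon>_def)
  qed (use \<open>0 < \<epsilon>\<close> in simp)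
  then show ?thesis using \<open>0 < \<epsilon>\<close> unfolding W_def by blast
qed

end
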